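(* Let $\mathcal{A}=\{a,b,c,\overline{a},\overline{b},\overline{c}\}$ and let $\varphi$ be the morphism of $\mathcal{A}^*$ defined by $$\varphi(a)=a\overline{c},\ \varphi(b)=c\overline{b},\ \varphi(c)=b\overline{a},\ \varphi(\overline{a})=ac,\ \varphi(\overline{b})=cb,\ \varphi(\overline{c})=ba,$$ and let $\mathcal{S}_\infty$ be its iterative fixed point beginning with $a$ (the classical Hanoi sequence, $\mathcal{S}_\infty = a\,\overline{c}\,b\,a\,c\,\overline{b}\,a\,\overline{c}\,b\,\overline{a}\,c\,b\cdots$). Let $\xi$ be the (non-uniform) morphism of $\mathcal{A}^*$ defined by $$\xi(a)=a\overline{c}b,\ \xi(b)=\overline{b},\ \xi(c)=\overline{a}c,\ \xi(\overline{a})=acb,\ \xi(\overline{b})=b,\ \xi(\overline{c})=ac.$$ Then $\mathcal{S}_\infty$ is the iterative fixed point of $\xi$ beginning with $a$; in particular the classical Hanoi sequence is non-uniformly pure morphic. Similarly, let $\mathcal{B}=\{a,b,\overline{a},\overline{b}\}$, let $\lambda$ be the morphism of $\mathcal{B}^*$ defined by $$\lambda(a)=aba,\ \lambda(\overline{a})=ab\overline{a},\ \lambda(b)=\overline{b}\,\overline{a}\,b,\ \lambda(\overline{b})=\overline{b}\,\overline{a}\,\overline{b},$$ and let $\mathcal{H}_\infty$ be its iterative fixed point beginning with $a$ (the lazy Hanoi sequence). Let $\eta$ be the (non-uniform) morphism of $\mathcal{B}^*$ defined by $$\eta(a)=aba\overline{b},\ \eta(b)=\overline{a}b,\ \eta(\overline{a})=ab\overline{a}\,\overline{b},\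 \eta(\overline{b})=\overline{a}\,\overline{b}.$$ Then $\mathcal{H}_\infty$ is the iterative fixed point of $\eta$ beginning with $a$; in particular the lazy Hanoi sequence is non-uniformly pure morphic.
   Context: For a finite alphabet $\mathcal{A}$, $\mathcal{A}^*$ is the free monoid of finite words under concatenation; a morphism $\sigma$ of $\mathcal{A}^*$ satisfies $\sigma(uv)=\sigma(u)\sigma(v)$ and is extended to infinite sequences letterwise. A morphism is $k$-uniform if all images of letters have length $k$; it is non-uniform otherwise. If $\sigma(a_0)=a_0x$ with $\sigma^\ell(x)$ nonempty for all $\ell$, then the words $\sigma^\ell(a_0)$ converge (have longer and longer common prefixes) to an infinite sequence, called the iterative fixed point of $\sigma$ beginning with $a_0$. A sequence is non-uniformly pure morphic if it is the iterative fixed point of a non-uniform morphism. (The letters $a,b,c$ denote the Tower of Hanoi moves peg I→II, II→III, III→I and the barred letters their inverses; $\mathcal{S}_\infty$ is the infinite sequence of moves of the optimal recursive solution, and $\mathcal{H}_\infty$ that of the lazy Tower of Hanoi using only moves $a,\overline a,b,\overline b$.) *)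

theory Defs
  imports Main
begin

definition morph :: "('a \<Rightarrow> 'a list) \<Rightarrow> 'a list \<Rightarrow> 'a list" where
  "morph \<sigma> w = concat (map \<sigma> w)"

definition uniform :: "('a \<Rightarrow> 'a list) \<Rightarrow> nat \<Rightarrow> bool" where
  "uniform \<sigma> k \<longleftrightarrow> (\<forall>x. length (\<sigma> x) = k)"

definition non_uniform :: "('a \<Rightarrow> 'a list) \<Rightarrow> bool" where
  "non_uniform \<sigma> \<longleftrightarrow> \<not> (\<exists>k. uniform \<sigma> k)"

definition iter_fixpoint :: "('a \<Rightarrow> 'a list) \<Rightarrow> 'a \<Rightarrow> (nat \<Rightarrow> 'a) \<Rightarrow> bool" where
  "iter_fixpoint \<sigma> a0 s \<longleftrightarrow>
     (\<exists>x. \<sigma> a0 = a0 # x \<and> (\<forall>l. (morph \<sigma> ^^ l) x \<noteq> [])) \<and>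
     (\<forall>n. \<exists>L. \<forall>l\<ge>L. n < length ((morph \<sigma> ^^ l) [a0]) \<and> (morph \<sigma> ^^ l) [a0] ! n = s n)"

definition nonuniformly_pure_morphic :: "(nat \<Rightarrow> 'a) \<Rightarrow> bool" where
  "nonuniformly_pure_morphic s \<longleftrightarrow>
     (\<exists>\<sigma> a0. non_uniform \<sigma> \<and> iter_fixpoint \<sigma> a0 s)"

datatype hl = A | B | C | Abar | Bbar | Cbar

fun phi :: "hl \<Rightarrow> hl list" where
  "phi A = [A, Cbar]" | "phi B = [C, Bbar]" | "phi C = [B, Abar]"
| "phi Abar = [A, C]" | "phi Bbar = [C, B]" | "phi Cbar = [B, A]"

fun xi :: "hl \<Rightarrow> hl list" where
  "xi A = [A, Cbar, B]" | "xi B = [Bbar]" | "xi C = [Abar, C]"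
| "xi Abar = [A, C, B]" | "xi Bbar = [B]" | "xi Cbar = [A, C]"

datatype ll = LA | LB | LAbar | LBbar

fun lam :: "ll \<Rightarrow> ll list" where
  "lam LA = [LA, LB, LA]" | "lam LAbar = [LA, LB, LAbar]"
| "lam LB = [LBbar, LAbar, LB]" | "lam LBbar = [LBbar, LAbar, LBbar]"

fun eta :: "ll \<Rightarrow> ll list" where
  "eta LA = [LA, LB, LA, LBbar]" | "eta LB = [LAbar, LB]"
| "eta LAbar = [LA, LB, LAbar, LBbar]" | "eta LBbar = [LAbar, LBbar]"

end

theory Submission
  imports Defs "HOL-Library.Sublist"
begin

text \<open>Let \<open>s\<close> (here \<open>\<phi>\<close> or \<open>\<lambda>\<close>) and \<open>t\<close> (here \<open>\<xi>\<close> or \<open>\<eta>\<close>) be morphisms that both prolong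
  the letter \<open>a\<close>. Suppose \<open>t \<circ> s\<close> agrees with \<open>s \<circ> s\<close> up to letter-dependent boundary words,
  \<open>u(x) t(s(x)) = s(s(x)) v(x)\<close>, where \<open>v(x) = u(y)\<close> whenever \<open>x y\<close> can be adjacent. Along a word
  of adjacent letters the boundary words then cancel telescopically, so with \<open>u(a)\<close> empty,
  \<open>t(s\<^sup>n\<^sup>+\<^sup>1(a))\<close> is \<open>s\<^sup>n\<^sup>+\<^sup>2(a)\<close> followed by a single boundary word. As the iterates of \<open>s\<close> grow
  without bound, induction on \<open>n\<close> shows that every \<open>t\<^sup>n(a)\<close> is a prefix of some \<open>s\<^sup>m(a)\<close>, so the two
  sequences of iterates have the same limit.\<close>

lemma morph_Nil [simp]: "morph \<sigma> [] = []"
  by (simp add: morph_def)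

lemma morph_Cons [simp]: "morph \<sigma> (x # w) = \<sigma> x @ morph \<sigma> w"
  by (simp add: morph_def)

lemma morph_append [simp]: "morph \<sigma> (v @ w) = morph \<sigma> v @ morph \<sigma> w"
  by (simp add: morph_def)

lemma prefix_morph: "prefix v w \<Longrightarrow> prefix (morph \<sigma> v) (morph \<sigma> w)"
  unfolding prefix_def by auto

lemma length_morph_ge:
  assumes "\<And>x. \<sigma> x \<noteq> []"
  shows "length w \<le> length (morph \<sigma> w)"
proof (induction w)
  case (Cons x w)
  have "1 \<le> length (\<sigma> x)" using assms[of x] by (simp add: Suc_le_eq)
  with Cons show ?case by simp
qed simp

lemma length_funpow_morph_ge:
  assumes "\<And>x. \<sigma> x \<noteq> []"
  shows "length w \<le> length ((morph \<sigma> ^^ l) w)"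
  by (induction l) (auto intro: order_trans length_morph_ge[OF assms])

lemma successively_morph:
  assumes "\<And>x. successively R (\<sigma> x)" and "\<And>x. \<sigma> x \<noteq> []"
    and "\<And>x y. R x y \<Longrightarrow> R (last (\<sigma> x)) (hd (\<sigma> y))"
  shows "successively R w \<Longrightarrow> successively R (morph \<sigma> w)"
proof (induction w rule: induct_list012)
  case (3 x y zs)
  have "successively R (morph \<sigma> (y # zs))" using 3 by simp
  moreover have "hd (morph \<sigma> (y # zs)) = hd (\<sigma> y)" using assms(2)[of y] by simp
  ultimately show ?case using 3 assms by (simp add: successively_append_iff)
qed (use assms(1) in simp_all)

lemma morph_morph_telescope:
  assumes boundary_identity: "\<And>x. u x @ morph t (s x) = morph s (s x) @ v x"
  shows "successively (\<lambda>x y. v x = u y) w \<Longrightarrow> w \<noteq> [] \<Longrightarrow>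
    u (hd w) @ morph t (morph s w) = morph s (morph s w) @ v (last w)"
proof (induction w rule: induct_list012)
  case (2 x)
  then show ?case using boundary_identity[of x] by simp
next
  case (3 x y zs)
  have "u x @ morph t (morph s (x # y # zs))
      = morph s (s x) @ (v x @ morph t (morph s (y # zs)))"
    using boundary_identity[of x] by (simp flip: append_assoc)
  also have "\<dots> = morph s (s x) @ (u y @ morph t (morph s (y # zs)))"
    using "3.prems"(1) by simp
  also have "\<dots> = morph s (morph s (x # y # zs)) @ v (last (x # y # zs))"
    using 3 by simp
  finally show ?case by simp
qed simp

lemma prefix_nth: "prefix v w \<Longrightarrow> i < length v \<Longrightarrow> w ! i = v ! i"
  unfolding prefix_def by (auto simp: nth_append)

definition prefix_of :: "'a list \<Rightarrow> (nat \<Rightarrow> 'a) \<Rightarrow> bool" where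
  "prefix_of w s \<longleftrightarrow> (\<forall>i<length w. w ! i = s i)"

lemma prefix_of_prefix: "prefix v w \<Longrightarrow> prefix_of w s \<Longrightarrow> prefix_of v s"
  unfolding prefix_of_def by (metis prefix_length_le prefix_nth order_less_le_trans)

abbreviation iterates :: "('a \<Rightarrow> 'a list) \<Rightarrow> 'a \<Rightarrow> nat \<Rightarrow> 'a list" where
  "iterates \<sigma> a n \<equiv> (morph \<sigma> ^^ n) [a]"

locale prolongable =
  fixes \<sigma> :: "'a \<Rightarrow> 'a list" and a :: 'a
  assumes prolongs: "\<sigma> a = a # tl (\<sigma> a)"
    and tl_nonempty: "tl (\<sigma> a) \<noteq> []"
    and nonerasing: "\<And>x. \<sigma> x \<noteq> []"
begin

lemma iterates_eq_Cons: "\<exists>w. iterates \<sigma> a n = a # w"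
  by (induction n) (auto, metis morph_Cons prolongs append_Cons)

lemma length_iterates: "n < length (iterates \<sigma> a n)"
proof (induction n)
  case (Suc n)
  obtain w where w: "iterates \<sigma> a n = a # w" using iterates_eq_Cons by blast
  have "length (iterates \<sigma> a (Suc n)) = length (\<sigma> a) + length (morph \<sigma> w)"
    by (simp add: w)
  moreover have "2 \<le> length (\<sigma> a)"
    using tl_nonempty by (cases "\<sigma> a") (auto simp: Suc_le_eq)
  moreover have "length w \<le> length (morph \<sigma> w)" by (rule length_morph_ge[of \<sigma>, OF nonerasing])
  ultimately show ?case using Suc w by simp
qed simp

lemma prefix_iterates: "m \<le> n \<Longrightarrow> prefix (iterates \<sigma> a m) (iterates \<sigma> a n)"
proof (rule prefix_order.lift_Suc_mono_le)
  show "prefix (iterates \<sigma> a k) (iterates \<sigma> a (Suc k))" for k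
  proof (induction k)
    case 0
    show ?case by (simp add: prefix_def) (metis append_Cons append_Nil prolongs)
  qed (simp add: prefix_morph)
qed

lemma iter_fixpoint_iff: "iter_fixpoint \<sigma> a s \<longleftrightarrow> (\<forall>n. prefix_of (iterates \<sigma> a n) s)"
proof
  assume fp: "iter_fixpoint \<sigma> a s"
  show "\<forall>n. prefix_of (iterates \<sigma> a n) s"
    unfolding prefix_of_def
  proof (intro allI impI)
    fix n i assume i: "i < length (iterates \<sigma> a n)"
    obtain L where "\<forall>l\<ge>L. iterates \<sigma> a l ! i = s i"
      using fp unfolding iter_fixpoint_def by blast
    then have "iterates \<sigma> a (max L n) ! i = s i" by simp
    moreover have "prefix (iterates \<sigma> a n) (iterates \<sigma> a (max L n))"
      by (rule prefix_iterates) simp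
    ultimately show "iterates \<sigma> a n ! i = s i"
      using prefix_nth i by metis
  qed
next
  assume pre: "\<forall>n. prefix_of (iterates \<sigma> a n) s"
  have "n < length (iterates \<sigma> a l) \<and> iterates \<sigma> a l ! n = s n" if "Suc n \<le> l" for n l
  proof -
    have "n < length (iterates \<sigma> a l)" using length_iterates[of l] that by simp
    then show ?thesis using pre unfolding prefix_of_def by blast
  qed
  moreover have "(morph \<sigma> ^^ l) (tl (\<sigma> a)) \<noteq> []" for l
    using length_funpow_morph_ge[of \<sigma> "tl (\<sigma> a)" l, OF nonerasing] tl_nonempty by (metis le_zero_eq length_0_conv)
  ultimately show "iter_fixpoint \<sigma> a s"
    unfolding iter_fixpoint_def using prolongs by blast
qed

lemma iter_fixpoint_exists: "\<exists>s. iter_fixpoint \<sigma> a s"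
proof -
  define s where "s i = iterates \<sigma> a (Suc i) ! i" for i
  have "prefix_of (iterates \<sigma> a n) s" for n
    unfolding prefix_of_def
  proof (intro allI impI)
    fix i assume i: "i < length (iterates \<sigma> a n)"
    let ?m = "max n (Suc i)"
    have n_m: "prefix (iterates \<sigma> a n) (iterates \<sigma> a ?m)"
      and i_m: "prefix (iterates \<sigma> a (Suc i)) (iterates \<sigma> a ?m)"
      by (rule prefix_iterates, simp)+
    have "iterates \<sigma> a n ! i = iterates \<sigma> a ?m ! i"
      using prefix_nth[OF n_m i] by simp
    also have "\<dots> = s i"
      using prefix_nth[OF i_m Suc_lessD[OF length_iterates]] s_def by simp
    finally show "iterates \<sigma> a n ! i = s i" .
  qed
  then show ?thesis using iter_fixpoint_iff by blast
qed

end

text \<open>The relation \<open>v x = u y\<close> over-approximates which letters \<open>x y\<close> occur adjacently in the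
  iterates \<open>s\<^sup>n(a)\<close>.\<close>
locale telescoping = s: prolongable s a + t: prolongable t a
  for s t :: "'a \<Rightarrow> 'a list" and a :: 'a +
  fixes u v :: "'a \<Rightarrow> 'a list"
  assumes u_start: "u a = []"
    and boundary_identity: "\<And>x. u x @ morph t (s x) = morph s (s x) @ v x"
    and adjacent_images: "\<And>x. successively (\<lambda>x y. v x = u y) (s x)"
    and adjacent_borders: "\<And>x y. v x = u y \<Longrightarrow> v (last (s x)) = u (hd (s y))"
begin

lemma adjacent_iterates: "successively (\<lambda>x y. v x = u y) (iterates s a n)"
  by (induction n)
    (simp_all add: successively_morph[OF adjacent_images s.nonerasing adjacent_borders])

lemma morph_iterates_Suc:
  "morph t (iterates s a (Suc n)) = iterates s a (Suc (Suc n)) @ v (last (iterates s a n))"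
proof -
  have "iterates s a n \<noteq> []" and "hd (iterates s a n) = a"
    using s.iterates_eq_Cons[of n] by auto
  then have "morph t (morph s (iterates s a n))
      = morph s (morph s (iterates s a n)) @ v (last (iterates s a n))"
    using morph_morph_telescope[OF boundary_identity adjacent_iterates] u_start by (metis append_Nil)
  then show ?thesis by simp
qed

lemma iterates_prefix_iterates: "\<exists>m. prefix (iterates t a n) (iterates s a m)"
proof (induction n)
  case 0
  then show ?case by (metis funpow_0 prefix_order.refl)
next
  case (Suc n)
  then obtain m0 where m0: "prefix (iterates t a n) (iterates s a m0)" by blast
  define m where "m = max m0 (length (iterates t a (Suc n)))"
  have "prefix (iterates t a n) (iterates s a (Suc m))"
    using m0 s.prefix_iterates[of m0 "Suc m"] m_def by (simp add: prefix_order.trans)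
  then have "prefix (iterates t a (Suc n))
      (iterates s a (Suc (Suc m)) @ v (last (iterates s a m)))"
    using prefix_morph[of _ _ t] morph_iterates_Suc[of m] by (metis funpow.simps(2) comp_apply)
  moreover have "length (iterates t a (Suc n)) \<le> length (iterates s a (Suc (Suc m)))"
    using s.length_iterates[of "Suc (Suc m)"] m_def by simp
  ultimately show ?case
    by (metis prefix_length_prefix prefix_order.refl prefix_append)
qed

lemma iter_fixpoint_transfer: "iter_fixpoint s a g \<Longrightarrow> iter_fixpoint t a g"
  unfolding s.iter_fixpoint_iff t.iter_fixpoint_iff
  using iterates_prefix_iterates prefix_of_prefix by blast

end

lemma non_uniformI: "length (\<sigma> x) \<noteq> length (\<sigma> y) \<Longrightarrow> non_uniform \<sigma>"
  unfolding non_uniform_def uniform_def by metis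

fun hanoi_pre :: "hl \<Rightarrow> hl list" where
  "hanoi_pre A = []" | "hanoi_pre Abar = []" | "hanoi_pre B = [B]"
| "hanoi_pre Bbar = [B]" | "hanoi_pre C = [C]" | "hanoi_pre Cbar = [C]"

fun hanoi_post :: "hl \<Rightarrow> hl list" where
  "hanoi_post A = [C]" | "hanoi_post Abar = [C]" | "hanoi_post B = []"
| "hanoi_post Bbar = []" | "hanoi_post C = [B]" | "hanoi_post Cbar = [B]"

interpretation hanoi: telescoping phi xi A hanoi_pre hanoi_post
proof unfold_locales
  fix x y
  show "phi x \<noteq> []" "xi x \<noteq> []" by (cases x; simp)+
  show "hanoi_pre x @ morph xi (phi x) = morph phi (phi x) @ hanoi_post x"
    "successively (\<lambda>x y. hanoi_post x = hanoi_pre y) (phi x)" by (cases x; simp)+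
  show "hanoi_post x = hanoi_pre y \<Longrightarrow> hanoi_post (last (phi x)) = hanoi_pre (hd (phi y))"
    by (cases x; cases y; simp)
qed simp_all

fun lazy_pre :: "ll \<Rightarrow> ll list" where
  "lazy_pre LA = []" | "lazy_pre LAbar = []" | "lazy_pre LB = [LBbar]" | "lazy_pre LBbar = [LBbar]"

fun lazy_post :: "ll \<Rightarrow> ll list" where
  "lazy_post LA = [LBbar]" | "lazy_post LAbar = [LBbar]" | "lazy_post LB = []" | "lazy_post LBbar = []"

interpretation lazy_hanoi: telescoping lam eta LA lazy_pre lazy_post
proof unfold_locales
  fix x y
  show "lam x \<noteq> []" "eta x \<noteq> []" by (cases x; simp)+
  show "lazy_pre x @ morph eta (lam x) = morph lam (lam x) @ lazy_post x"
    "successively (\<lambda>x y. lazy_post x = lazy_pre y) (lam x)" by (cases x; simp)+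
  show "lazy_post x = lazy_pre y \<Longrightarrow> lazy_post (last (lam x)) = lazy_pre (hd (lam y))"
    by (cases x; cases y; simp)
qed simp_all

theorem mainTheorem1:
  shows "(\<exists>s. iter_fixpoint phi A s)
       \<and> (\<forall>s. iter_fixpoint phi A s \<longrightarrow> iter_fixpoint xi A s)
       \<and> non_uniform xi
       \<and> (\<forall>s. iter_fixpoint phi A s \<longrightarrow> nonuniformly_pure_morphic s)
       \<and> (\<exists>h. iter_fixpoint lam LA h)
       \<and> (\<forall>h. iter_fixpoint lam LA h \<longrightarrow> iter_fixpoint eta LA h)
       \<and> non_uniform eta
       \<and> (\<forall>h. iter_fixpoint lam LA h \<longrightarrow> nonuniformly_pure_morphic h)"
proof -
  have "non_uniform xi" by (rule non_uniformI[of _ A B]) simp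
  moreover have "non_uniform eta" by (rule non_uniformI[of _ LA LB]) simp
  ultimately show ?thesis
    using hanoi.s.iter_fixpoint_exists hanoi.iter_fixpoint_transfer
      lazy_hanoi.s.iter_fixpoint_exists lazy_hanoi.iter_fixpoint_transfer
    unfolding nonuniformly_pure_morphic_def by blast
qed

end
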